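(* Let $\varepsilon\ge0$ and $t\ge1$. For probability vectors $G=(g_1,\dots,g_t)$, $G'=(g'_1,\dots,g'_t)$ define $$\overline H^*(G,G')=\max_{S\subseteq[t]}\frac{\sum_{i\in[t]\setminus S}g_i+e^{\varepsilon}\sum_{j\in S}g_j}{\sum_{i\in[t]\setminus S}g'_i+e^{\varepsilon}\sum_{j\in S}g'_j}.$$ Then $\max_{G,G'}\ln\overline H^*(G,G')=\varepsilon$, where the maximum is over all pairs of probability vectors of length $t$, and this maximum is attained by any pair $G,G'$ such that for every $i\in[t]$, $g_i\neq0$ implies $g'_i=0$.
   Context: In the paper, $G$ and $G'$ are the conditional distributions $P(\hat X\mid X_k=x)$ and $P(\hat X\mid X_k=x')$ of an attribute $\hat X$ with $t$ values given two values of a correlated attribute $X_k$, and $\ln\max_{x,x'}\overline H^*(G,G')$ is the (upper bound on the) correlation-induced privacy leakage $L_{\hat X\to X_k}$ when $\hat X$ is perturbed by an $\varepsilon$-LDP mechanism. $[t]=\{1,\dots,t\}$. *)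

theory Defs
  imports Complex_Main
begin

text \<open>A probability vector of length t, indexed by [t] = {1..t}
  (values outside {1..t} are irrelevant).\<close>
definition prob_vec :: "nat \<Rightarrow> (nat \<Rightarrow> real) \<Rightarrow> bool" where
  "prob_vec t g \<longleftrightarrow> (\<forall>i\<in>{1..t}. 0 \<le> g i) \<and> (\<Sum>i=1..t. g i) = 1"

definition Hbar :: "real \<Rightarrow> nat \<Rightarrow> (nat \<Rightarrow> real) \<Rightarrow> (nat \<Rightarrow> real) \<Rightarrow> real" where
  "Hbar eps t g g' = Max ((\<lambda>S. ((\<Sum>i\<in>{1..t} - S. g i) + exp eps * (\<Sum>j\<in>S. g j)) /
                               ((\<Sum>i\<in>{1..t} - S. g' i) + exp eps * (\<Sum>j\<in>S. g' j)))
                         ` Pow {1..t})"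

end

theory Submission
  imports Defs
begin

text \<open>Every ratio in the maximum defining Hbar has the form m(G,S) / m(G',S), where the
  tilted mass m(G,S) = G([t] - S) + e^eps G(S) of a probability vector lies between 1 and e^eps.
  Hence Hbar lies between 1 and e^eps, and its logarithm is at most eps. If the supports of G
  and G' are disjoint, taking S = supp G gives m(G,S) = e^eps and m(G',S) = 1, so the
  bound e^eps is attained; two point masses at different coordinates are such a pair.\<close>

definition tilted_mass :: "real \<Rightarrow> nat \<Rightarrow> (nat \<Rightarrow> real) \<Rightarrow> nat set \<Rightarrow> real" where
  "tilted_mass eps t g S = (\<Sum>i\<in>{1..t} - S. g i) + exp eps * (\<Sum>j\<in>S. g j)"

lemma prob_vec_sum_diff:
  assumes "prob_vec t g" "S \<subseteq> {1..t}"
  shows "(\<Sum>i\<in>{1..t} - S. g i) = 1 - (\<Sum>j\<in>S. g j)"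
  using assms sum.subset_diff[of S "{1..t}" g] unfolding prob_vec_def by simp

lemma prob_vec_sum_nonneg:
  assumes "prob_vec t g" "S \<subseteq> {1..t}"
  shows "0 \<le> (\<Sum>j\<in>S. g j)"
  using assms unfolding prob_vec_def by (intro sum_nonneg) auto

lemma prob_vec_sum_le_1:
  assumes "prob_vec t g" "S \<subseteq> {1..t}"
  shows "(\<Sum>j\<in>S. g j) \<le> 1"
  using prob_vec_sum_diff[OF assms] prob_vec_sum_nonneg[of t g "{1..t} - S"] assms(1) by simp

lemma prob_vec_point_mass:
  assumes "k \<in> {1..t}"
  shows "prob_vec t (\<lambda>i. if i = k then 1 else 0)"
  using assms unfolding prob_vec_def by (simp add: sum.delta)

lemma tilted_mass_eq:
  assumes "prob_vec t g" "S \<subseteq> {1..t}"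
  shows "tilted_mass eps t g S = 1 + (exp eps - 1) * (\<Sum>j\<in>S. g j)"
  using prob_vec_sum_diff[OF assms] unfolding tilted_mass_def by (simp add: algebra_simps)

lemma tilted_mass_ge_1:
  assumes "prob_vec t g" "S \<subseteq> {1..t}" "eps \<ge> 0"
  shows "1 \<le> tilted_mass eps t g S"
  using tilted_mass_eq[OF assms(1,2)] prob_vec_sum_nonneg[OF assms(1,2)] assms(3) by simp

lemma tilted_mass_le_exp:
  assumes "prob_vec t g" "S \<subseteq> {1..t}" "eps \<ge> 0"
  shows "tilted_mass eps t g S \<le> exp eps"
proof -
  have "(exp eps - 1) * (\<Sum>j\<in>S. g j) \<le> (exp eps - 1) * 1"
    using prob_vec_sum_le_1[OF assms(1,2)] assms(3) by (intro mult_left_mono) auto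
  then show ?thesis using tilted_mass_eq[OF assms(1,2)] by simp
qed

lemma Hbar_eq_Max_tilted:
  "Hbar eps t g g' = Max ((\<lambda>S. tilted_mass eps t g S / tilted_mass eps t g' S) ` Pow {1..t})"
  unfolding Hbar_def tilted_mass_def ..

lemma tilted_ratio_le_Hbar:
  assumes "S \<subseteq> {1..t}"
  shows "tilted_mass eps t g S / tilted_mass eps t g' S \<le> Hbar eps t g g'"
  unfolding Hbar_eq_Max_tilted using assms by (intro Max_ge) auto

lemma one_le_Hbar:
  assumes "prob_vec t g" "prob_vec t g'"
  shows "1 \<le> Hbar eps t g g'"
  using tilted_ratio_le_Hbar[of "{}" t eps g g'] tilted_mass_eq[OF assms(1)] tilted_mass_eq[OF assms(2)]
  by simp

lemma Hbar_le_exp: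
  assumes "prob_vec t g" "prob_vec t g'" "eps \<ge> 0"
  shows "Hbar eps t g g' \<le> exp eps"
proof -
  have "tilted_mass eps t g S / tilted_mass eps t g' S \<le> exp eps / 1" if "S \<subseteq> {1..t}" for S
    using tilted_mass_le_exp[OF assms(1) that assms(3)] tilted_mass_ge_1[OF assms(1) that assms(3)]
      tilted_mass_ge_1[OF assms(2) that assms(3)]
    by (intro frac_le) auto
  then show ?thesis unfolding Hbar_eq_Max_tilted by (subst Max_le_iff) auto
qed

lemma Hbar_eq_exp_if_disjoint_supports:
  assumes "prob_vec t g" "prob_vec t g'" "eps \<ge> 0"
    and disjoint: "\<forall>i\<in>{1..t}. g i \<noteq> 0 \<longrightarrow> g' i = 0"
  shows "Hbar eps t g g' = exp eps"
proof -
  define S where "S = {i\<in>{1..t}. g i \<noteq> 0}"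
  have S: "S \<subseteq> {1..t}" unfolding S_def by auto
  have "(\<Sum>i\<in>{1..t} - S. g i) = 0" unfolding S_def by (intro sum.neutral) auto
  then have "tilted_mass eps t g S = exp eps"
    using tilted_mass_eq[OF assms(1) S] prob_vec_sum_diff[OF assms(1) S] by simp
  moreover have "(\<Sum>i\<in>S. g' i) = 0" unfolding S_def using disjoint by (intro sum.neutral) auto
  then have "tilted_mass eps t g' S = 1"
    using tilted_mass_eq[OF assms(2) S] by simp
  ultimately have "exp eps \<le> Hbar eps t g g'"
    using tilted_ratio_le_Hbar[OF S, of eps g g'] by simp
  then show ?thesis using Hbar_le_exp[OF assms(1-3)] by simp
qed

theorem corollary2:
  fixes eps :: real and t :: nat
  assumes "eps \<ge> 0" and "t \<ge> 2"
  shows "(\<forall>g g'. prob_vec t g \<and> prob_vec t g' \<longrightarrow> ln (Hbar eps t g g') \<le> eps)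
       \<and> (\<exists>g g'. prob_vec t g \<and> prob_vec t g' \<and> ln (Hbar eps t g g') = eps)
       \<and> (\<forall>g g'. prob_vec t g \<and> prob_vec t g' \<and> (\<forall>i\<in>{1..t}. g i \<noteq> 0 \<longrightarrow> g' i = 0)
                 \<longrightarrow> ln (Hbar eps t g g') = eps)"
proof (intro conjI allI impI)
  fix g g' assume "prob_vec t g \<and> prob_vec t g'"
  then have "1 \<le> Hbar eps t g g'" "Hbar eps t g g' \<le> exp eps"
    using one_le_Hbar Hbar_le_exp assms(1) by auto
  then show "ln (Hbar eps t g g') \<le> eps" using ln_le_cancel_iff[of _ "exp eps"] by simp
next
  fix g g' assume "prob_vec t g \<and> prob_vec t g' \<and> (\<forall>i\<in>{1..t}. g i \<noteq> 0 \<longrightarrow> g' i = 0)"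
  then show "ln (Hbar eps t g g') = eps" using Hbar_eq_exp_if_disjoint_supports assms(1) by simp
next
  let ?g = "\<lambda>i::nat. if i = 1 then 1 else 0 :: real"
  let ?g' = "\<lambda>i::nat. if i = 2 then 1 else 0 :: real"
  have "prob_vec t ?g" "prob_vec t ?g'"
    using assms(2) by (auto intro: prob_vec_point_mass)
  moreover have "Hbar eps t ?g ?g' = exp eps"
    using calculation assms(1) by (intro Hbar_eq_exp_if_disjoint_supports) auto
  ultimately show "\<exists>g g'. prob_vec t g \<and> prob_vec t g' \<and> ln (Hbar eps t g g') = eps"
    by (intro exI[of _ ?g] exI[of _ ?g']) simp
qed

end
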